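(* Let $L\ge2$ and $q\in[1,2]$. Under balance $\lambda=0$, the weight decay $\frac12\sum_{i=1}^L\|w_i\|_{L_2}^2$ expressed in $x=\prod_iw_i$ equals $\frac L2\sum_{j\in[n]}|x_j|^{2/L}$. This function coincides with the on-manifold regularizer $M_{\mathrm{reg}}(x)=\frac{L}{L(2-q)+q}\sum_{j\in[n]}|x_j|^{2-q\frac{L-1}{L}}$ (for all $x\in\mathbb{R}^n$) if and only if $q=2$.
   Context: Setting: $w_1,\dots,w_L\in\mathbb{R}^n$, $x=\prod_iw_i$ entrywise; balance $\lambda=0$ means $|w_i|^q=|w_j|^q$ entrywise for all $i,j$, so $|w_i|=|x|^{1/L}$. $M_{\mathrm{reg}}$ is the regularizer induced on $x$ by decoupled weight decay under $L_p$ steepest descent ($1/p+1/q=1$) with mirror map $\nabla^2R(x)=\operatorname{diag}(1/(L|x_j|^{q(L-1)/L}))$, defined as $\sum_j\int^{x_j}\partial_j^2R(s)\,Ls\,ds$. *)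

theory Defs
  imports "HOL-Analysis.Analysis"
begin

definition prod_weights :: "nat \<Rightarrow> (nat \<Rightarrow> real^'n) \<Rightarrow> real^'n" where
  "prod_weights L w = (\<chi> j. \<Prod>i\<in>{1..L}. w i $ j)"

definition balanced :: "real \<Rightarrow> nat \<Rightarrow> (nat \<Rightarrow> real^'n) \<Rightarrow> bool" where
  "balanced q L w \<longleftrightarrow> (\<forall>i\<in>{1..L}. \<forall>k\<in>{1..L}. \<forall>j. \<bar>w i $ j\<bar> powr q = \<bar>w k $ j\<bar> powr q)"

definition wd_reg :: "nat \<Rightarrow> real^'n \<Rightarrow> real" where
  "wd_reg L x = real L / 2 * (\<Sum>j\<in>UNIV. \<bar>x $ j\<bar> powr (2 / real L))"

definition M_reg :: "real \<Rightarrow> nat \<Rightarrow> real^'n \<Rightarrow> real" where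
  "M_reg q L x = real L / (real L * (2 - q) + q) *
     (\<Sum>j\<in>UNIV. \<bar>x $ j\<bar> powr (2 - q * (real L - 1) / real L))"

end

theory Submission
  imports Defs
begin

text \<open>Balance with q > 0 forces all factors to have the same modulus |x|^(1/L) entrywise, so
  both sides of the weight-decay identity equal (L/2) \<Sum>_j |w_1(j)|^2. For the converse,
  evaluating at the all-ones vector kills the exponents and leaves L/2 = L/(L(2-q)+q),
  i.e. (L - 1)(2 - q) = 0.\<close>

lemma power2_norm_vec_eq_sum: "(norm (v :: real^'n))\<^sup>2 = (\<Sum>j\<in>UNIV. (v $ j)\<^sup>2)"
  unfolding norm_vec_def L2_set_def by (simp add: sum_nonneg)

lemma abs_eq_if_abs_powr_eq:
  assumes "(r::real) > 0" "\<bar>a::real\<bar> powr r = \<bar>b\<bar> powr r"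
  shows "\<bar>a\<bar> = \<bar>b\<bar>"
proof -
  have "(\<bar>a\<bar> powr r) powr (1/r) = (\<bar>b\<bar> powr r) powr (1/r)" using assms by simp
  thus ?thesis using assms(1) by (simp add: powr_powr)
qed

lemma power_powr_divide:
  assumes "(a::real) \<ge> 0" "n > 0"
  shows "(a ^ n) powr (r / real n) = a powr r"
proof (cases "a = 0")
  case False
  then have "(a ^ n) powr (r / real n) = (a powr real n) powr (r / real n)"
    using assms(1) by (simp add: powr_realpow)
  also have "\<dots> = a powr r" using assms(2) by (simp add: powr_powr)
  finally show ?thesis .
qed (use assms in simp)

lemma balanced_abs_eq:
  assumes "balanced q L w" "q > 0" "i \<in> {1..L}" "k \<in> {1..L}"
  shows "\<bar>w i $ j\<bar> = \<bar>w k $ j\<bar>"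
  using assms abs_eq_if_abs_powr_eq unfolding balanced_def by blast

lemma balanced_abs_prod_weights:
  assumes "balanced q L w" "q > 0" "L \<ge> 1"
  shows "\<bar>prod_weights L w $ j\<bar> = \<bar>w 1 $ j\<bar> ^ L"
proof -
  have "\<bar>prod_weights L w $ j\<bar> = (\<Prod>i\<in>{1..L}. \<bar>w i $ j\<bar>)"
    unfolding prod_weights_def by (simp add: abs_prod)
  also have "\<dots> = (\<Prod>i\<in>{1..L}. \<bar>w 1 $ j\<bar>)"
    using assms by (intro prod.cong refl balanced_abs_eq) auto
  finally show ?thesis by simp
qed

lemma balanced_sum_norm_power2:
  assumes "balanced q L w" "q > 0" "L \<ge> 1"
  shows "(\<Sum>i\<in>{1..L}. (norm (w i))\<^sup>2) = real L * (\<Sum>j\<in>UNIV. \<bar>w 1 $ j\<bar>\<^sup>2)"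
proof -
  have "(norm (w i))\<^sup>2 = (\<Sum>j\<in>UNIV. \<bar>w 1 $ j\<bar>\<^sup>2)" if "i \<in> {1..L}" for i
    using balanced_abs_eq[OF assms(1,2) that, of 1] assms(3)
    unfolding power2_norm_vec_eq_sum by (metis power2_abs atLeastAtMost_iff order_refl)
  then show ?thesis by simp
qed

lemma weight_decay_eq_wd_reg:
  assumes "balanced q L w" "q > 0" "L \<ge> 1"
  shows "(1/2) * (\<Sum>i\<in>{1..L}. (norm (w i))\<^sup>2) = wd_reg L (prod_weights L w)"
proof -
  have "\<bar>prod_weights L w $ j\<bar> powr (2 / real L) = \<bar>w 1 $ j\<bar>\<^sup>2" for j
    using assms by (simp add: balanced_abs_prod_weights power_powr_divide)
  then show ?thesis
    unfolding wd_reg_def balanced_sum_norm_power2[OF assms] by simp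
qed

lemma wd_reg_eq_M_reg_two:
  assumes "L > 0"
  shows "wd_reg L x = M_reg 2 L x"
proof -
  have "2 - 2 * (real L - 1) / real L = 2 / real L" using assms by (simp add: field_simps)
  then show ?thesis unfolding wd_reg_def M_reg_def by simp
qed

lemma wd_reg_ones: "wd_reg L ((\<chi> j. 1) :: real^'n) = real L / 2 * real CARD('n)"
  unfolding wd_reg_def by simp

lemma M_reg_ones:
  "M_reg q L ((\<chi> j. 1) :: real^'n) = real L / (real L * (2 - q) + q) * real CARD('n)"
  unfolding M_reg_def by simp

lemma M_reg_constant_eq_half_iff:
  assumes "L \<ge> 2"
  shows "real L / (real L * (2 - q) + q) = real L / 2 \<longleftrightarrow> q = 2"
proof
  assume eq: "real L / (real L * (2 - q) + q) = real L / 2"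
  moreover have "real L > 0" using assms by simp
  ultimately have "real L * (2 - q) + q \<noteq> 0" by auto
  with eq have "real L * (real L * (2 - q) + q) = real L * 2"
    by (simp add: field_simps)
  with \<open>real L > 0\<close> have "real L * (2 - q) + q = 2" by simp
  then have "(real L - 1) * (2 - q) = 0" by (simp add: algebra_simps)
  with assms show "q = 2" by simp
qed simp

theorem corollary4:
  fixes L :: nat and q :: real
  assumes "L \<ge> 2" and "1 \<le> q" and "q \<le> 2"
  shows "(\<forall>w :: nat \<Rightarrow> real^'n. balanced q L w \<longrightarrow>
            (1/2) * (\<Sum>i\<in>{1..L}. (norm (w i))\<^sup>2) = wd_reg L (prod_weights L w))
         \<and> ((\<forall>x :: real^'n. wd_reg L x = M_reg q L x) \<longleftrightarrow> q = 2)"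
proof (intro conjI allI impI iffI)
  fix w :: "nat \<Rightarrow> real^'n"
  assume "balanced q L w"
  with assms show "(1/2) * (\<Sum>i\<in>{1..L}. (norm (w i))\<^sup>2) = wd_reg L (prod_weights L w)"
    by (intro weight_decay_eq_wd_reg) auto
next
  fix x :: "real^'n"
  assume "q = 2"
  with assms show "wd_reg L x = M_reg q L x" by (simp add: wd_reg_eq_M_reg_two)
next
  assume "\<forall>x :: real^'n. wd_reg L x = M_reg q L x"
  then have "wd_reg L ((\<chi> j. 1) :: real^'n) = M_reg q L ((\<chi> j. 1) :: real^'n)"
    by blast
  moreover have "real CARD('n) \<noteq> 0" by simp
  ultimately have "real L / (real L * (2 - q) + q) = real L / 2"
    unfolding wd_reg_ones M_reg_ones by (metis mult_right_cancel)
  then show "q = 2" using M_reg_constant_eq_half_iff[OF assms(1)] by blast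
qed

end
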